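(* Let $W\subset S$ be a finite-dimensional $\mathbb{F}_q$-subspace and $\lambda,\mu$ partitions. If $T_{\lambda/\mu}(W)\neq0$, then $0\le\lambda_i-\mu_i\le\dim W$ for all $i$; in particular $\mu\subseteq\lambda$.
   Context: Let $q$ be a power of a prime $p$, $S=\mathbb{F}_q[x_1,\dots,x_n]$, $\widehat S=\bigcup_{r\ge0}\mathbb{F}_q[x_1^{q^{-r}},\dots,x_n^{q^{-r}}]$, $\varphi(u)=u^q$ the Frobenius automorphism of $\widehat S$. For a subspace $W\subset S$ of dimension $k$ with basis $w_1,\dots,w_k$ and strictly decreasing nonnegative integers $\alpha_1>\dots>\alpha_k$, $A_\alpha(W)=\det(w_i^{q^{\alpha_j}})_{i,j}$; for a partition $\lambda$ with at most $k$ nonzero parts, $S_\lambda(W)=A_{\lambda+\delta_k}(W)/A_{\delta_k}(W)$, $\delta_k=(k-1,\dots,0)$. $E_r(W)=S_{(1^r)}(W)$ for $0\le r\le k$, $E_r(W)=0$ otherwise. For partitions $\lambda,\mu$ with $N=\max\{\ell(\lambda),\ell(\mu)\}$ ($\ell$ = number of nonzero parts), $T_{\lambda/\mu}(W)=\det\big((-1)^{\lambda_i-\mu_j-i+j}\varphi^{\lambda_i-i}E_{\lambda_i-\mu_j-i+j}(W)\big)_{1\le i,j\le N}$. Parts $\lambda_i$ with $i>\ell(\lambda)$ are $0$. $\mu\subseteq\lambda$ means $\mu_i\le\lambda_i$ for all $i$. *)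

theory Defs
  imports Complex_Main "HOL-Library.Poly_Mapping" "HOL-Library.Cardinality" "HOL-Combinatorics.Permutations"
begin

text \<open>F_q is a finite field type 'k (q = CARD('k)).  Elements of
  the perfect closure are represented inside the monoid algebra
  'k[Q^(nat)] : finitely supported maps from monomials (finitely supported
  exponent vectors nat =>0 rat, variable i <-> x_(i+1)) to coefficients.\<close>

type_synonym 'k palg = "(nat \<Rightarrow>\<^sub>0 rat) \<Rightarrow>\<^sub>0 'k"

text \<open>S = F_q[x_1,...,x_n]: integer (natural) exponents, variables below n.\<close>
definition S_set :: "nat \<Rightarrow> ('k::field) palg set" where
  "S_set n = {u. \<forall>m\<in>Poly_Mapping.keys u. \<forall>v\<in>Poly_Mapping.keys m.
       v < n \<and> Poly_Mapping.lookup m v \<in> \<nat>}"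

text \<open>Shat = union over r of F_q[x_1^(q^-r),...,x_n^(q^-r)].\<close>
definition Shat_set :: "nat \<Rightarrow> ('k::{field,finite}) palg set" where
  "Shat_set n = {u. \<forall>m\<in>Poly_Mapping.keys u. \<forall>v\<in>Poly_Mapping.keys m.
       v < n \<and> (\<exists>a r::nat. Poly_Mapping.lookup m v = of_nat a / of_nat (CARD('k) ^ r))}"

definition scal :: "'k::field \<Rightarrow> 'k palg \<Rightarrow> 'k palg" where
  "scal c u = Poly_Mapping.single 0 c * u"

definition lin_indep :: "nat \<Rightarrow> (nat \<Rightarrow> 'k::field palg) \<Rightarrow> bool" where
  "lin_indep k w = (\<forall>c::nat \<Rightarrow> 'k. (\<Sum>i=1..k. scal (c i) (w i)) = 0 \<longrightarrow> (\<forall>i\<in>{1..k}. c i = 0))"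

definition frob :: "'k::{field,finite} palg \<Rightarrow> 'k palg" where
  "frob u = u ^ CARD('k)"

definition frob_pow :: "nat \<Rightarrow> int \<Rightarrow> 'k::{field,finite} palg \<Rightarrow> 'k palg" where
  "frob_pow n m u = (if 0 \<le> m then (frob ^^ nat m) u
      else (THE v. v \<in> Shat_set n \<and> (frob ^^ nat (- m)) v = u))"

definition detN :: "nat \<Rightarrow> (nat \<Rightarrow> nat \<Rightarrow> 'a::comm_ring_1) \<Rightarrow> 'a" where
  "detN N M = (\<Sum>p | p permutes {1..N}. of_int (sign p) * (\<Prod>i=1..N. M i (p i)))"

definition moore :: "nat \<Rightarrow> (nat \<Rightarrow> 'k::{field,finite} palg) \<Rightarrow> (nat \<Rightarrow> nat) \<Rightarrow> 'k palg" where
  "moore k w \<alpha> = detN k (\<lambda>i j. w i ^ (CARD('k) ^ \<alpha> j))"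

text \<open>S_lambda(W) = A_(lambda+delta_k)(W) / A_(delta_k)(W), delta_k = (k-1,...,0).\<close>
definition schurW :: "nat \<Rightarrow> (nat \<Rightarrow> 'k::{field,finite} palg) \<Rightarrow> (nat \<Rightarrow> nat) \<Rightarrow> 'k palg" where
  "schurW k w lam = (THE u. u * moore k w (\<lambda>j. k - j) = moore k w (\<lambda>j. lam j + (k - j)))"

definition EW :: "nat \<Rightarrow> (nat \<Rightarrow> 'k::{field,finite} palg) \<Rightarrow> int \<Rightarrow> 'k palg" where
  "EW k w r = (if 0 \<le> r \<and> r \<le> int k then schurW k w (\<lambda>j. if j \<le> nat r then 1 else 0) else 0)"

text \<open>Partitions: weakly decreasing lists of positive naturals; parts are 1-based,
  parts beyond the length are 0.\<close>
definition is_partition :: "nat list \<Rightarrow> bool" where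
  "is_partition l = (sorted_wrt (\<ge>) l \<and> 0 \<notin> set l)"

definition part :: "nat list \<Rightarrow> nat \<Rightarrow> nat" where
  "part l i = (if 1 \<le> i \<and> i \<le> length l then l ! (i - 1) else 0)"

definition sgnpow :: "int \<Rightarrow> 'a::comm_ring_1" where
  "sgnpow r = (if even r then 1 else -1)"

definition TW :: "nat \<Rightarrow> nat \<Rightarrow> (nat \<Rightarrow> 'k::{field,finite} palg) \<Rightarrow> nat list \<Rightarrow> nat list \<Rightarrow> 'k palg" where
  "TW n k w lam mu = (let N = max (length lam) (length mu) in
     detN N (\<lambda>i j. let d = int (part lam i) - int (part mu j) - int i + int j in
        sgnpow d * frob_pow n (int (part lam i) - int i) (EW k w d)))"

end

theory Submission
  imports Defs
begin

text \<open>The entries of the Jacobi-Trudi type matrix defining \<open>T\<^bsub>\<lambda>/\<mu>\<^esub>(W)\<close> vanish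
  whenever the index \<open>\<lambda>\<^sub>a - \<mu>\<^sub>b - a + b\<close> of \<open>E\<close> lies outside \<open>[0, dim W]\<close>.
  If \<open>\<mu>\<^sub>i > \<lambda>\<^sub>i\<close>, the rows \<open>a \<ge> i\<close> and columns \<open>b \<le> i\<close> then form a zero block,
  and if \<open>\<lambda>\<^sub>i - \<mu>\<^sub>i > dim W\<close> so do the rows \<open>a \<le> i\<close> and columns \<open>b \<ge> i\<close>.  In
  both cases the block has \<open>N + 1\<close> rows and columns in total, so every term of
  the Leibniz expansion meets it and the determinant is zero.\<close>

lemma funpow_frob: "(frob ^^ j) (v::('k::{field,finite}) palg) = v ^ (CARD('k) ^ j)"
  by (induction j) (simp_all add: frob_def power_mult[symmetric] mult.commute)

lemma frob_pow_0 [simp]: "frob_pow n m (0::('k::{field,finite}) palg) = 0"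
proof (cases "0 \<le> m")
  case True
  then show ?thesis by (simp add: frob_pow_def funpow_frob)
next
  case False
  have "(THE v. v \<in> Shat_set n \<and> (frob ^^ nat (- m)) v = (0::'k palg)) = 0"
    by (rule the_equality) (simp_all add: Shat_set_def funpow_frob)
  with False show ?thesis by (simp add: frob_pow_def)
qed

lemma detN_eq_0_if_zero_block:
  fixes M :: "nat \<Rightarrow> nat \<Rightarrow> 'a::comm_ring_1"
  assumes R: "R \<subseteq> {1..N}" and C: "C \<subseteq> {1..N}" and card: "N < card R + card C"
    and zero: "\<And>i j. i \<in> R \<Longrightarrow> j \<in> C \<Longrightarrow> M i j = 0"
  shows "detN N M = 0"
  unfolding detN_def
proof (rule sum.neutral, rule ballI)
  fix p assume "p \<in> {p. p permutes {1..N}}"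
  hence p: "p permutes {1..N}" by simp
  have "\<exists>i\<in>R. p i \<in> C"
  proof (rule ccontr)
    assume "\<not> ?thesis"
    hence disjoint: "p ` R \<inter> C = {}" by auto
    have "finite R" "finite C" using R C finite_subset by blast+
    moreover have "inj_on p R" using p permutes_inj inj_on_subset by blast
    ultimately have "card (p ` R \<union> C) = card R + card C"
      using disjoint by (simp add: card_Un_disjoint card_image)
    moreover have "p ` R \<union> C \<subseteq> {1..N}" using R C permutes_image[OF p] by auto
    then have "card (p ` R \<union> C) \<le> N" using card_mono[of "{1..N}"] by fastforce
    ultimately show False using card by simp
  qed
  then obtain i where "i \<in> R" "p i \<in> C" by blast
  then have "(\<Prod>i=1..N. M i (p i)) = 0" using R zero by (intro prod_zero) auto
  then show "of_int (sign p) * (\<Prod>i=1..N. M i (p i)) = 0" by simp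
qed

lemma part_eq_0: "length l < i \<Longrightarrow> part l i = 0"
  by (simp add: part_def)

lemma part_antimono:
  assumes "is_partition l" "1 \<le> i" "i \<le> j"
  shows "part l j \<le> part l i"
proof (cases "j \<le> length l")
  case True
  have "sorted_wrt (\<ge>) l" using assms(1) by (simp add: is_partition_def)
  moreover have "i = j \<or> i - 1 < j - 1" "j - 1 < length l" using assms(2,3) True by auto
  ultimately have "l ! (j - 1) \<le> l ! (i - 1)" by (auto simp: sorted_wrt_iff_nth_less)
  then show ?thesis using assms True by (simp add: part_def)
qed (simp add: part_def)

definition TW_entry ::
    "nat \<Rightarrow> nat \<Rightarrow> (nat \<Rightarrow> 'k::{field,finite} palg) \<Rightarrow> nat list \<Rightarrow> nat list \<Rightarrow> nat \<Rightarrow> nat \<Rightarrow> 'k palg"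
  where "TW_entry n k w lam mu i j =
    (let d = int (part lam i) - int (part mu j) - int i + int j in
       sgnpow d * frob_pow n (int (part lam i) - int i) (EW k w d))"

lemma TW_eq_detN: "TW n k w lam mu = detN (max (length lam) (length mu)) (TW_entry n k w lam mu)"
  by (simp only: TW_def TW_entry_def[abs_def] Let_def)

lemma TW_entry_eq_0:
  assumes "int (part lam i) - int (part mu j) - int i + int j \<notin> {0..int k}"
  shows "TW_entry n k w lam mu i j = 0"
  using assms by (auto simp: TW_entry_def EW_def)

lemma part_le_if_TW_ne_0:
  assumes lam: "is_partition lam" and mu: "is_partition mu"
    and T: "TW n k w lam mu \<noteq> 0" and i: "1 \<le> i"
  shows "part mu i \<le> part lam i"
proof (rule ccontr)
  assume lt: "\<not> part mu i \<le> part lam i"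
  define N where "N = max (length lam) (length mu)"
  have "i \<le> N" using lt part_eq_0[of mu i] unfolding N_def by fastforce
  have "detN N (TW_entry n k w lam mu) = 0"
  proof (rule detN_eq_0_if_zero_block[where R = "{i..N}" and C = "{1..i}"])
    fix a b assume a: "a \<in> {i..N}" and b: "b \<in> {1..i}"
    have "part lam a \<le> part lam i" using part_antimono[OF lam i] a by simp
    moreover have "part mu i \<le> part mu b" using part_antimono[OF mu] b by simp
    ultimately show "TW_entry n k w lam mu a b = 0" using lt a b by (intro TW_entry_eq_0) auto
  qed (use i \<open>i \<le> N\<close> in auto)
  with T show False by (simp add: TW_eq_detN N_def)
qed

lemma part_diff_le_if_TW_ne_0:
  assumes lam: "is_partition lam" and mu: "is_partition mu"
    and T: "TW n k w lam mu \<noteq> 0" and i: "1 \<le> i"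
  shows "part lam i - part mu i \<le> k"
proof (rule ccontr)
  assume gt: "\<not> part lam i - part mu i \<le> k"
  define N where "N = max (length lam) (length mu)"
  have "i \<le> N" using gt part_eq_0[of lam i] unfolding N_def by fastforce
  have "detN N (TW_entry n k w lam mu) = 0"
  proof (rule detN_eq_0_if_zero_block[where R = "{1..i}" and C = "{i..N}"])
    fix a b assume a: "a \<in> {1..i}" and b: "b \<in> {i..N}"
    have "part lam i \<le> part lam a" using part_antimono[OF lam] a by simp
    moreover have "part mu b \<le> part mu i" using part_antimono[OF mu i] b by simp
    ultimately show "TW_entry n k w lam mu a b = 0" using gt a b by (intro TW_entry_eq_0) auto
  qed (use i \<open>i \<le> N\<close> in auto)
  with T show False by (simp add: TW_eq_detN N_def)
qed

theorem mainTheorem2: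
  fixes w :: "nat \<Rightarrow> ('k::{field,finite}) palg"
    and n k :: nat and lam mu :: "nat list"
  assumes "\<forall>i\<in>{1..k}. w i \<in> S_set n"
    and "lin_indep k w"
    and "is_partition lam" and "is_partition mu"
    and "TW n k w lam mu \<noteq> 0"
  shows "(\<forall>i\<ge>1. part mu i \<le> part lam i \<and> part lam i - part mu i \<le> k)"
  using part_le_if_TW_ne_0[OF assms(3-5)] part_diff_le_if_TW_ne_0[OF assms(3-5)] by blast

end
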